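(* For all integers $r\ge 2$ and $e\ge 2$ there exists $n_0(r,e)$ such that $f_r(n,(r-1)e,e)=h_r(n,e)$ for all $n\ge n_0(r,e)$.
   Context: An $r$-graph is an $r$-uniform hypergraph. A $(v,e)$-configuration in an $r$-graph is a subgraph with $e$ edges and at most $v$ vertices. $f_r(n,v,e)$ denotes the maximum number of edges in an $r$-graph on $n$ vertices containing no $(v,e)$-configuration. A (Berge) cycle of length $k\ge 2$ in a hypergraph is an alternating sequence $v_1,e_1,v_2,e_2,\dots,v_k,e_k$ of distinct vertices $v_i$ and distinct edges $e_i$ such that $v_i,v_{i+1}\in e_i$ for each $i$ (indices mod $k$); e.g. a $2$-cycle is a pair of edges sharing two distinct vertices. The girth of an $r$-graph is the length of its shortest cycle (infinite if there is none). $h_r(n,g)$ denotes the maximum number of edges in an $r$-graph on $n$ vertices of girth greater than $g$. *)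

theory Defs
  imports Main
begin

definition r_graph :: "nat \<Rightarrow> nat \<Rightarrow> nat set set \<Rightarrow> bool" where
  "r_graph r n H \<longleftrightarrow> (\<forall>E\<in>H. E \<subseteq> {..<n} \<and> card E = r)"

definition has_config :: "nat set set \<Rightarrow> nat \<Rightarrow> nat \<Rightarrow> bool" where
  "has_config H v e \<longleftrightarrow> (\<exists>F. F \<subseteq> H \<and> card F = e \<and> card (\<Union>F) \<le> v)"

definition f_r :: "nat \<Rightarrow> nat \<Rightarrow> nat \<Rightarrow> nat \<Rightarrow> nat" where
  "f_r r n v e = Max {card H | H. r_graph r n H \<and> \<not> has_config H v e}"

definition has_berge_cycle :: "nat set set \<Rightarrow> nat \<Rightarrow> bool" where
  "has_berge_cycle H k \<longleftrightarrow> 2 \<le> k \<and> (\<exists>vs es.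
     inj_on vs {..<k} \<and> inj_on es {..<k} \<and>
     (\<forall>i<k. es i \<in> H \<and> vs i \<in> es i \<and> vs ((i + 1) mod k) \<in> es i))"

definition girth_gt :: "nat set set \<Rightarrow> nat \<Rightarrow> bool" where
  "girth_gt H g \<longleftrightarrow> (\<forall>k. 2 \<le> k \<and> k \<le> g \<longrightarrow> \<not> has_berge_cycle H k)"

definition h_r :: "nat \<Rightarrow> nat \<Rightarrow> nat \<Rightarrow> nat" where
  "h_r r n g = Max {card H | H. r_graph r n H \<and> girth_gt H g}"

end

theory Submission
  imports Defs
begin

text \<open>
  Girth greater than \<open>e\<close> excludes \<open>((r - 1) e, e)\<close>-configurations, because \<open>e\<close> edges
  without a Berge cycle span at least \<open>(r - 1) e + 1\<close> vertices. Conversely, let \<open>H\<close> have no such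
  configuration. Growing a cycle of length at most \<open>e\<close> edge by edge shows that every edge on a
  short cycle lies in a component with fewer than \<open>e\<close> edges and at most \<open>r - 1\<close> vertices per
  edge; all other edges form a hypergraph of girth greater than \<open>e\<close>. If these cycle components
  have exactly \<open>r - 1\<close> vertices per edge, their edges are traded for a loose path on the same
  vertices. If one of them has fewer, every other component has fewer than \<open>e\<close> edges, the
  components off the short cycles are acyclic and each wastes a vertex, and for large \<open>n\<close> this
  bounds the number of edges by \<open>n div (r - 1)\<close>, the size of a loose cycle of length \<open>e + 1\<close>
  continued by a loose path.
\<close>

section \<open>Berge cycles and acyclic hypergraphs\<close>

lemma has_berge_cycle_mono:
  "has_berge_cycle F k \<Longrightarrow> F \<subseteq> H \<Longrightarrow> has_berge_cycle H k"
  unfolding has_berge_cycle_def by blast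

lemma has_berge_cycleI:
  assumes "2 \<le> k" "inj_on vs {..<k}" "inj_on es {..<k}"
    and "\<And>i. i < k \<Longrightarrow> es i \<in> H \<and> vs i \<in> es i"
    and "\<And>i. Suc i < k \<Longrightarrow> vs (Suc i) \<in> es i"
    and "vs 0 \<in> es (k - 1)"
  shows "has_berge_cycle H k"
proof -
  have "vs ((i + 1) mod k) \<in> es i" if "i < k" for i
  proof (cases "Suc i < k")
    case False
    then have "Suc i = k" using that by simp
    then have "i = k - 1" "(i + 1) mod k = 0" by auto
    then show ?thesis using assms(6) by simp
  qed (use assms(5) in simp)
  then show ?thesis
    unfolding has_berge_cycle_def using assms(1-4) by blast
qed

lemma berge_cycle_length_le_card:
  assumes "has_berge_cycle F k" "finite F"
  shows "k \<le> card F"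
proof -
  obtain es where es: "inj_on es {..<k}" "es ` {..<k} \<subseteq> F"
    using assms(1) unfolding has_berge_cycle_def by blast
  have "k = card (es ` {..<k})"
    using es(1) by (simp add: card_image)
  also have "\<dots> \<le> card F"
    using es(2) assms(2) by (rule card_mono[rotated])
  finally show ?thesis .
qed

lemma mod_Suc_neq_self:
  fixes i k :: nat
  assumes "2 \<le> k" "i < k"
  shows "Suc i mod k \<noteq> i"
proof (cases "Suc i < k")
  case False
  then have "Suc i = k" using assms(2) by simp
  then show ?thesis using assms(1) by auto
qed simp

lemma berge_cycle_pred_edge:
  fixes k :: nat
  assumes "2 \<le> k" "i < k" "\<forall>j<k. vs ((j + 1) mod k) \<in> es j"
  obtains j where "j < k" "j \<noteq> i" "vs i \<in> es j"
proof -
  define j where "j = (if i = 0 then k - 1 else i - 1)"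
  have "j < k" "j \<noteq> i" "(j + 1) mod k = i"
    using assms(1,2) by (auto simp: j_def)
  then show thesis using that assms(3) by metis
qed

lemma card_Union_berge_cycle_le:
  fixes k :: nat
  assumes "2 \<le> k" "inj_on vs {..<k}"
    and cycle: "\<forall>i<k. vs i \<in> es i \<and> vs ((i + 1) mod k) \<in> es i"
    and card_es: "\<forall>i<k. card (es i) = r"
  shows "card (\<Union>i<k. es i) \<le> (r - 1) * k"
proof -
  have cover: "(\<Union>i<k. es i) \<subseteq> (\<Union>i<k. es i - {vs i})"
  proof
    fix x assume "x \<in> (\<Union>i<k. es i)"
    then obtain i where i: "i < k" "x \<in> es i" by blast
    show "x \<in> (\<Union>i<k. es i - {vs i})"
    proof (cases "x = vs i")
      case True
      obtain j where "j < k" "j \<noteq> i" "vs i \<in> es j"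
        using berge_cycle_pred_edge[OF assms(1) i(1)] cycle by blast
      then have "vs j \<noteq> vs i"
        using \<open>inj_on vs {..<k}\<close> i(1) by (auto dest: inj_onD)
      then show ?thesis using True \<open>j < k\<close> \<open>vs i \<in> es j\<close> by blast
    qed (use i in blast)
  qed
  have "card (\<Union>i<k. es i) = card (\<Union>i<k. es i - {vs i})"
    using cover by (intro arg_cong[where f = card]) blast
  also have "\<dots> \<le> (\<Sum>i<k. card (es i - {vs i}))"
    by (rule card_UN_le) simp
  also have "\<dots> = (\<Sum>i<k. r - 1)"
    using cycle card_es by (intro sum.cong) (auto simp: card_Diff_singleton_if)
  finally show ?thesis by (simp add: mult.commute)
qed

text \<open>The cycle consists of the edges \<open>Es i, \<dots>, Es (j - 1)\<close> and the vertices
  \<open>xs j, xs (i + 1), \<dots>, xs (j - 1)\<close>.\<close>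
lemma has_berge_cycle_walk_segment:
  assumes walk: "\<And>m. Es m \<in> F" "\<And>m. xs m \<in> Es m" "\<And>m. xs (Suc m) \<in> Es m"
    and "Suc i < j" "xs j \<in> Es i"
    and distinct: "\<And>a b. a < b \<Longrightarrow> b < j \<Longrightarrow> Es a \<noteq> Es b \<and> xs a \<noteq> xs b"
    and fresh: "\<And>b. i < b \<Longrightarrow> b < j \<Longrightarrow> xs b \<noteq> xs j"
  shows "has_berge_cycle F (j - i)"
proof -
  define vs where "vs t = (if t = 0 then xs j else xs (i + t))" for t
  show ?thesis
  proof (rule has_berge_cycleI[where vs = vs and es = "\<lambda>t. Es (i + t)"])
    show "2 \<le> j - i"
      using \<open>Suc i < j\<close> by simp
    have "vs a \<noteq> vs b" if "a < b" "b < j - i" for a b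
      using that fresh[of "i + b"] distinct[of "i + a" "i + b"] by (auto simp: vs_def less_diff_conv)
    then show "inj_on vs {..<j - i}"
      by (intro inj_onI) (metis lessThan_iff linorder_neqE_nat)
    have "Es (i + a) \<noteq> Es (i + b)" if "a < b" "b < j - i" for a b
      using that distinct[of "i + a" "i + b"] by (simp add: less_diff_conv)
    then show "inj_on (\<lambda>t. Es (i + t)) {..<j - i}"
      by (intro inj_onI) (metis lessThan_iff linorder_neqE_nat)
    show "Es (i + t) \<in> F \<and> vs t \<in> Es (i + t)" for t
      using walk \<open>xs j \<in> Es i\<close> by (simp add: vs_def)
    show "vs (Suc t) \<in> Es (i + t)" for t
      using walk(3)[of "i + t"] by (simp add: vs_def)
    show "vs 0 \<in> Es (i + (j - i - 1))"
      using walk(3)[of "j - 1"] \<open>Suc i < j\<close> by (simp add: vs_def)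
  qed
qed

text \<open>A walk that never leaves an edge through the vertex it entered by must repeat an edge
  or a vertex; the first repetition closes a cycle.\<close>
lemma has_berge_cycle_if_nonbacktracking_walk:
  assumes "finite F"
    and walk: "\<And>m. Es m \<in> F" "\<And>m. xs m \<in> Es m" "\<And>m. xs (Suc m) \<in> Es m"
    and nonbacktracking: "\<And>m. Es (Suc m) \<noteq> Es m" "\<And>m. xs (Suc m) \<noteq> xs m"
  shows "\<exists>k. has_berge_cycle F k"
proof -
  define repeats where "repeats j \<longleftrightarrow> (\<exists>i<j. Es i = Es j \<or> xs i = xs j)" for j
  have "\<not> inj Es"
    using finite_subset[OF _ assms(1)] walk(1) finite_imageD by blast
  then obtain a b where "a \<noteq> b" "Es a = Es b"
    unfolding inj_def by blast
  then have "\<exists>j. repeats j"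
    unfolding repeats_def by (metis linorder_neqE_nat)
  define j where "j = (LEAST j. repeats j)"
  have "repeats j"
    unfolding j_def using \<open>\<exists>j. repeats j\<close> by (rule LeastI_ex)
  have distinct: "Es a \<noteq> Es b \<and> xs a \<noteq> xs b" if "a < b" "b < j" for a b
    using not_less_Least[OF that(2)[unfolded j_def]] that(1) unfolding repeats_def by blast
  obtain i where segment: "Suc i < j" "xs j \<in> Es i" "\<And>b. i < b \<Longrightarrow> b < j \<Longrightarrow> xs b \<noteq> xs j"
  proof (cases "\<exists>i<j. xs i = xs j")
    case True
    then obtain i where "i < j" "xs i = xs j" by blast
    moreover have "j \<noteq> Suc i"
      using nonbacktracking(2) \<open>xs i = xs j\<close> by metis
    ultimately show thesis
      using that[of i] walk(2) distinct by (metis Suc_lessI)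
  next
    case False
    then obtain i where "i < j" "Es i = Es j"
      using \<open>repeats j\<close> unfolding repeats_def by blast
    moreover have "j \<noteq> Suc i"
      using nonbacktracking(1) \<open>Es i = Es j\<close> by metis
    ultimately show thesis
      using that[of i] walk(2) False by (metis Suc_lessI less_trans)
  qed
  have "has_berge_cycle F (j - i)"
    using walk segment(1,2) distinct segment(3) by (rule has_berge_cycle_walk_segment)
  then show ?thesis by blast
qed

text \<open>A leaf edge meets the rest of the hypergraph in at most one vertex; without leaves one
  can walk forever, leaving each edge by a vertex other than the one used to enter it.\<close>
lemma has_berge_cycle_if_no_leaf:
  assumes "finite F" "F \<noteq> {}"
    and no_leaf: "\<And>E. E \<in> F \<Longrightarrow> 2 \<le> card (E \<inter> \<Union>(F - {E}))"
  shows "\<exists>k. has_berge_cycle F k"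
proof -
  have step: "\<exists>E' y. E' \<in> F \<and> y \<in> E' \<and> E' \<noteq> E \<and> y \<in> E \<and> y \<noteq> x" if "E \<in> F" for E x
  proof -
    have "\<not> E \<inter> \<Union>(F - {E}) \<subseteq> {x}"
      using no_leaf[OF that] card_mono[of "{x}" "E \<inter> \<Union>(F - {E})"] by auto
    then show ?thesis by blast
  qed
  have "\<exists>w. \<forall>m. (fst (w m) \<in> F \<and> snd (w m) \<in> fst (w m)) \<and>
      fst (w (Suc m)) \<noteq> fst (w m) \<and> snd (w (Suc m)) \<in> fst (w m) \<and> snd (w (Suc m)) \<noteq> snd (w m)"
  proof (rule dependent_nat_choice)
    show "\<exists>p. fst p \<in> F \<and> snd p \<in> fst p"
      using assms(2) no_leaf by fastforce
    show "\<exists>q. (fst q \<in> F \<and> snd q \<in> fst q) \<and> fst q \<noteq> fst p \<and> snd q \<in> fst p \<and> snd q \<noteq> snd p"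
      if "fst p \<in> F \<and> snd p \<in> fst p" for p :: "nat set \<times> nat" and m :: nat
      using step[of "fst p" "snd p"] that by auto
  qed
  then obtain w where w: "\<And>m. fst (w m) \<in> F \<and> snd (w m) \<in> fst (w m)"
    and w_step: "\<And>m. fst (w (Suc m)) \<noteq> fst (w m) \<and> snd (w (Suc m)) \<in> fst (w m)
      \<and> snd (w (Suc m)) \<noteq> snd (w m)"
    by blast
  show ?thesis
    by (rule has_berge_cycle_if_nonbacktracking_walk[OF assms(1), of "fst \<circ> w" "snd \<circ> w"])
      (use w w_step in auto)
qed

definition berge_acyclic :: "nat set set \<Rightarrow> bool" where
  "berge_acyclic F \<longleftrightarrow> (\<forall>k. \<not> has_berge_cycle F k)"

lemma berge_acyclic_subset:
  "berge_acyclic H \<Longrightarrow> F \<subseteq> H \<Longrightarrow> berge_acyclic F"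
  unfolding berge_acyclic_def using has_berge_cycle_mono by blast

lemma girth_gt_imp_berge_acyclic:
  assumes "girth_gt H g" "F \<subseteq> H" "finite F" "card F \<le> g"
  shows "berge_acyclic F"
  unfolding berge_acyclic_def
proof (intro allI notI)
  fix k assume "has_berge_cycle F k"
  moreover from this have "2 \<le> k" "k \<le> card F"
    using assms(3) by (auto simp: has_berge_cycle_def berge_cycle_length_le_card)
  ultimately show False
    using assms(1,2,4) has_berge_cycle_mono unfolding girth_gt_def by fastforce
qed

text \<open>Induction on the edges: an acyclic hypergraph has a leaf edge, which brings at least
  \<open>r - 1\<close> vertices of its own.\<close>
lemma card_Union_berge_acyclic:
  assumes "finite F" "F \<noteq> {}" "\<forall>E\<in>F. card E = r" "0 < r" "berge_acyclic F"
  shows "(r - 1) * card F + 1 \<le> card (\<Union>F)"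
  using assms
proof (induction "card F" arbitrary: F rule: less_induct)
  case less
  have fin_edges: "finite E" if "E \<in> F" for E
    using less.prems(3,4) that by (intro card_ge_0_finite) simp
  have "\<not> (\<forall>E\<in>F. 2 \<le> card (E \<inter> \<Union>(F - {E})))"
    using has_berge_cycle_if_no_leaf[OF less.prems(1,2)] less.prems(5)
    unfolding berge_acyclic_def by blast
  then obtain E where E: "E \<in> F" "card (E \<inter> \<Union>(F - {E})) \<le> 1"
    by (auto simp: not_le less_Suc_eq_le numeral_2_eq_2)
  show ?case
  proof (cases "F = {E}")
    case True
    then show ?thesis using less.prems(3,4) by simp
  next
    case False
    define F' where "F' = F - {E}"
    have "F' \<noteq> {}"
      using False E(1) by (auto simp: F'_def)
    have "card F = Suc (card F')"
      using card_Suc_Diff1[OF less.prems(1) E(1)] by (simp add: F'_def)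
    have IH: "(r - 1) * card F' + 1 \<le> card (\<Union>F')"
      using less.hyps[of F'] \<open>card F = Suc (card F')\<close> \<open>F' \<noteq> {}\<close> less.prems
      by (simp add: F'_def berge_acyclic_subset[of F])
    have "E \<union> \<Union>F' = \<Union>F"
      using E(1) by (auto simp: F'_def)
    moreover have "card E + card (\<Union>F') = card (E \<union> \<Union>F') + card (E \<inter> \<Union>F')"
      by (rule card_Un_Int) (use fin_edges E(1) less.prems(1) in \<open>auto simp: F'_def\<close>)
    ultimately have "r + card (\<Union>F') = card (\<Union>F) + card (E \<inter> \<Union>F')"
      using E(1) less.prems(3) by simp
    then have "card (\<Union>F') + (r - 1) \<le> card (\<Union>F)"
      using E(2) less.prems(4) unfolding F'_def by linarith
    then show ?thesis
      using IH \<open>card F = Suc (card F')\<close> by simp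
  qed
qed

lemma girth_gt_imp_no_config:
  assumes "0 < r" "1 \<le> e" "r_graph r n H" "girth_gt H e"
  shows "\<not> has_config H ((r - 1) * e) e"
proof
  assume "has_config H ((r - 1) * e) e"
  then obtain F where F: "F \<subseteq> H" "card F = e" "card (\<Union>F) \<le> (r - 1) * e"
    unfolding has_config_def by blast
  have "finite F" "F \<noteq> {}"
    using F(2) assms(2) by (auto intro: card_ge_0_finite)
  moreover have "\<forall>E\<in>F. card E = r"
    using F(1) assms(3) unfolding r_graph_def by blast
  moreover have "berge_acyclic F"
    using girth_gt_imp_berge_acyclic[OF assms(4) F(1)] F(2) \<open>finite F\<close> by simp
  ultimately have "(r - 1) * card F + 1 \<le> card (\<Union>F)"
    using assms(1) by (intro card_Union_berge_acyclic)
  then show False using F by simp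
qed

section \<open>Connected components\<close>

text \<open>\<open>comp_closed H B\<close>: the sub-hypergraph \<open>B\<close> is a union of connected components of \<open>H\<close>;
  \<open>component H E\<close> is then the connected component of the edge \<open>E\<close>.\<close>
definition comp_closed :: "'a set set \<Rightarrow> 'a set set \<Rightarrow> bool" where
  "comp_closed H B \<longleftrightarrow> B \<subseteq> H \<and> (\<forall>X\<in>H - B. X \<inter> \<Union>B = {})"

definition component :: "'a set set \<Rightarrow> 'a set \<Rightarrow> 'a set set" where
  "component H E = \<Inter>{B. comp_closed H B \<and> E \<in> B}"

lemma comp_closed_memI:
  "comp_closed H B \<Longrightarrow> X \<in> H \<Longrightarrow> X \<inter> \<Union>B \<noteq> {} \<Longrightarrow> X \<in> B"
  unfolding comp_closed_def by blast

lemma comp_closed_Union_disjoint: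
  "comp_closed H A \<Longrightarrow> comp_closed H B \<Longrightarrow> A \<inter> B = {} \<Longrightarrow> \<Union>A \<inter> \<Union>B = {}"
  unfolding comp_closed_def by blast

lemma comp_closed_Union:
  "(\<And>B. B \<in> BB \<Longrightarrow> comp_closed H B) \<Longrightarrow> comp_closed H (\<Union>BB)"
  unfolding comp_closed_def by blast

lemma comp_closed_Inter:
  "BB \<noteq> {} \<Longrightarrow> (\<And>B. B \<in> BB \<Longrightarrow> comp_closed H B) \<Longrightarrow> comp_closed H (\<Inter>BB)"
  unfolding comp_closed_def by blast

lemma comp_closed_Diff:
  assumes "comp_closed H A" "comp_closed H B"
  shows "comp_closed H (A - B)"
  unfolding comp_closed_def
proof (intro conjI ballI)
  show "A - B \<subseteq> H"
    using assms(1) unfolding comp_closed_def by blast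
  fix X assume X: "X \<in> H - (A - B)"
  show "X \<inter> \<Union>(A - B) = {}"
  proof (cases "X \<in> B")
    case True
    have "Y \<inter> \<Union>B = {}" if "Y \<in> A - B" for Y
      using that assms unfolding comp_closed_def by blast
    then show ?thesis using True by blast
  next
    case False
    then have "X \<inter> \<Union>A = {}"
      using X assms(1) unfolding comp_closed_def by blast
    then show ?thesis by blast
  qed
qed

lemma comp_closed_self: "comp_closed H H"
  unfolding comp_closed_def by blast

lemma comp_closed_component: "E \<in> H \<Longrightarrow> comp_closed H (component H E)"
  unfolding component_def using comp_closed_self
  by (intro comp_closed_Inter) auto

lemma mem_component: "E \<in> component H E"
  unfolding component_def by blast

lemma component_least: "comp_closed H B \<Longrightarrow> E \<in> B \<Longrightarrow> component H E \<subseteq> B"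
  unfolding component_def by blast

lemma component_subset: "E \<in> H \<Longrightarrow> component H E \<subseteq> H"
  using comp_closed_component unfolding comp_closed_def by blast

lemma component_eq:
  assumes "E \<in> H" "X \<in> component H E"
  shows "component H X = component H E"
proof
  show "component H X \<subseteq> component H E"
    using assms by (intro component_least comp_closed_component)
  have "X \<in> H"
    using assms component_subset by blast
  show "component H E \<subseteq> component H X"
  proof (rule ccontr)
    assume "\<not> component H E \<subseteq> component H X"
    then have "E \<notin> component H X"
      using \<open>X \<in> H\<close> component_least comp_closed_component by blast
    then have "component H E \<subseteq> component H E - component H X"
      using assms(1) \<open>X \<in> H\<close>
      by (intro component_least comp_closed_Diff comp_closed_component) (auto simp: mem_component)
    then show False
      using assms(2) mem_component by blast
  qed
qed

lemma component_disjoint: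
  "E \<in> H \<Longrightarrow> E' \<in> H \<Longrightarrow> component H E \<noteq> component H E' \<Longrightarrow>
    component H E \<inter> component H E' = {}"
  using component_eq by blast

lemma card_Un_le_if_Int:
  assumes "finite U" "finite X" "X \<inter> U \<noteq> {}"
  shows "card (X \<union> U) + 1 \<le> card U + card X"
proof -
  have "card X + card U = card (X \<union> U) + card (X \<inter> U)"
    using assms(2,1) by (rule card_Un_Int)
  moreover have "card (X \<inter> U) \<noteq> 0"
    using assms by simp
  ultimately show ?thesis by linarith
qed

text \<open>Grow \<open>A\<close> by edges meeting it, each bringing at most \<open>r - 1\<close> new vertices, until it has
  \<open>t\<close> edges or is a union of components.\<close>
lemma grow_subgraph:
  assumes "finite H" "\<forall>E\<in>H. card E = r" "0 < r" "A \<subseteq> H" "card A \<le> t"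
  shows "\<exists>B. A \<subseteq> B \<and> B \<subseteq> H \<and>
    card (\<Union>B) + (r - 1) * card A \<le> card (\<Union>A) + (r - 1) * card B \<and>
    (card B = t \<or> card B < t \<and> comp_closed H B) \<and>
    (\<forall>C. comp_closed H C \<and> A \<subseteq> C \<longrightarrow> B \<subseteq> C)"
  using assms(4,5)
proof (induction "t - card A" arbitrary: A rule: less_induct)
  case less
  have "finite A"
    using less.prems(1) assms(1) finite_subset by blast
  show ?case
  proof (cases "card A = t \<or> comp_closed H A")
    case True
    then show ?thesis using less.prems by (intro exI[of _ A]) auto
  next
    case False
    then obtain X where X: "X \<in> H" "X \<notin> A" "X \<inter> \<Union>A \<noteq> {}"
      using less.prems(1) unfolding comp_closed_def by auto
    have "card (insert X A) = Suc (card A)" "card A < t"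
      using X(2) \<open>finite A\<close> False less.prems(2) by auto
    then have smaller: "t - card (insert X A) < t - card A" "insert X A \<subseteq> H" "card (insert X A) \<le> t"
      using X(1) less.prems(1) by auto
    obtain B where B: "insert X A \<subseteq> B" "B \<subseteq> H"
      "card (\<Union>B) + (r - 1) * card (insert X A) \<le> card (\<Union>(insert X A)) + (r - 1) * card B"
      "card B = t \<or> card B < t \<and> comp_closed H B"
      "\<forall>C. comp_closed H C \<and> insert X A \<subseteq> C \<longrightarrow> B \<subseteq> C"
      using less.hyps[OF smaller] by blast
    have fin_edge: "finite E" if "E \<in> H" for E
      using that assms(2,3) by (intro card_ge_0_finite) auto
    have "card (X \<union> \<Union>A) + 1 \<le> card (\<Union>A) + card X"
    proof (rule card_Un_le_if_Int)
      show "finite (\<Union>A)"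
        using less.prems(1) \<open>finite A\<close> fin_edge by blast
    qed (use X fin_edge in auto)
    then have "card (X \<union> \<Union>A) + 1 \<le> card (\<Union>A) + r"
      using X(1) assms(2) by simp
    then have "card (\<Union>B) + (r - 1) * card A \<le> card (\<Union>A) + (r - 1) * card B"
      using B(3) \<open>card (insert X A) = Suc (card A)\<close> assms(3) by (simp add: algebra_simps)
    moreover have "B \<subseteq> C" if "comp_closed H C" "A \<subseteq> C" for C
      using B(5) X that comp_closed_memI[OF that(1) X(1)] by blast
    moreover have "A \<subseteq> B"
      using B(1) by blast
    ultimately show ?thesis
      using B(2,4) by (intro exI[of _ B]) simp
  qed
qed

section \<open>Loose paths and loose cycles\<close>

text \<open>A cycle through the new edge would enter and leave it through two distinct vertices
  lying on old edges.\<close>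
lemma girth_gt_insert:
  assumes "girth_gt G g" "finite E" "card (E \<inter> \<Union>G) \<le> 1"
  shows "girth_gt (insert E G) g"
  unfolding girth_gt_def
proof (intro allI impI notI)
  fix k assume k: "2 \<le> k \<and> k \<le> g" and "has_berge_cycle (insert E G) k"
  then obtain vs es where vs: "inj_on vs {..<k}" and es: "inj_on es {..<k}"
    and cycle: "\<forall>i<k. es i \<in> insert E G \<and> vs i \<in> es i \<and> vs ((i + 1) mod k) \<in> es i"
    unfolding has_berge_cycle_def by blast
  show False
  proof (cases "\<exists>j<k. es j = E")
    case True
    then obtain j where j: "j < k" "es j = E" by blast
    have other_edge: "es l \<in> G" if "l < k" "l \<noteq> j" for l
      using cycle es j that by (metis inj_onD insertE lessThan_iff)
    obtain l where "l < k" "l \<noteq> j" "vs j \<in> es l"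
      using berge_cycle_pred_edge[of k j vs es] k j(1) cycle by blast
    then have "vs j \<in> E \<inter> \<Union>G"
      using other_edge cycle j by blast
    moreover have "vs (Suc j mod k) \<in> E \<inter> \<Union>G"
    proof -
      have "Suc j mod k < k" "Suc j mod k \<noteq> j"
        using mod_Suc_neq_self[of k j] j(1) k by auto
      then have "vs (Suc j mod k) \<in> es (Suc j mod k)" "es (Suc j mod k) \<in> G"
        using cycle other_edge by auto
      moreover have "vs (Suc j mod k) \<in> E"
        using cycle[rule_format, OF j(1)] j(2) by simp
      ultimately show ?thesis by blast
    qed
    moreover have "vs j \<noteq> vs (Suc j mod k)"
      using vs mod_Suc_neq_self[of k j] j(1) k by (auto dest: inj_onD)
    ultimately have "2 \<le> card (E \<inter> \<Union>G)"
      using assms(2) card_mono[of "E \<inter> \<Union>G" "{vs j, vs (Suc j mod k)}"] by auto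
    then show False using assms(3) by simp
  next
    case False
    then have "has_berge_cycle G k"
      using k vs es cycle unfolding has_berge_cycle_def by blast
    then show False using assms(1) k unfolding girth_gt_def by blast
  qed
qed

text \<open>A loose path of \<open>s\<close> edges starting at \<open>z\<close>, all other vertices taken from \<open>W\<close>.\<close>
lemma exists_loose_path_extension:
  assumes "girth_gt G0 g" "r_graph r n G0" "finite G0" "2 \<le> r"
    and "finite W" "W \<subseteq> {..<n}" "W \<inter> \<Union>G0 = {}" "z < n" "z \<notin> W" "(r - 1) * s \<le> card W"
  shows "\<exists>G. G0 \<subseteq> G \<and> card G = card G0 + s \<and> girth_gt G g \<and> r_graph r n G \<and> finite G"
  using assms
proof (induction s arbitrary: G0 W z)
  case 0
  then show ?case by auto
next
  case (Suc s)
  obtain A where A: "A \<subseteq> W" "card A = r - 1"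
    using Suc.prems(10) obtain_subset_with_card_n[of "r - 1" W] by (auto simp: mult_Suc_right)
  have "finite A" "z \<notin> A"
    using A(1) Suc.prems(5,9) finite_subset by auto
  obtain a where "a \<in> A"
    using A(2) Suc.prems(4) by fastforce
  define E where "E = insert z A"
  have "card E = r" "finite E"
    using A(2) Suc.prems(4) \<open>finite A\<close> \<open>z \<notin> A\<close> by (auto simp: E_def)
  have "E \<notin> G0"
    using \<open>a \<in> A\<close> A(1) Suc.prems(7) by (auto simp: E_def)
  have "E \<inter> \<Union>G0 \<subseteq> {z}"
    using A(1) Suc.prems(7) by (auto simp: E_def)
  then have "card (E \<inter> \<Union>G0) \<le> 1"
    using card_mono[of "{z}"] by fastforce
  then have "girth_gt (insert E G0) g"
    using Suc.prems(1) \<open>finite E\<close> by (rule girth_gt_insert[rotated 2])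
  moreover have "r_graph r n (insert E G0)"
    using Suc.prems(2,6,8) A(1) \<open>card E = r\<close> by (auto simp: r_graph_def E_def)
  moreover have "(r - 1) * s \<le> card (W - A)"
    using Suc.prems(10) A \<open>finite A\<close> by (simp add: card_Diff_subset)
  moreover have "(W - A) \<inter> \<Union>(insert E G0) = {}"
    using Suc.prems(7,9) by (auto simp: E_def)
  moreover have "a < n" "a \<notin> W - A"
    using \<open>a \<in> A\<close> A(1) Suc.prems(6) by auto
  ultimately obtain G where "insert E G0 \<subseteq> G" "card G = card (insert E G0) + s"
    "girth_gt G g" "r_graph r n G" "finite G"
    using Suc.IH[of "insert E G0" "W - A" a] Suc.prems(3-6) by blast
  then show ?case
    using Suc.prems(3) \<open>E \<notin> G0\<close> by (intro exI[of _ G]) auto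
qed

definition loose_block :: "nat \<Rightarrow> nat \<Rightarrow> nat set" where
  "loose_block r i = {(r - 1) * i ..< (r - 1) * Suc i}"

text \<open>The loose cycle of length \<open>L\<close> on the vertices below \<open>(r - 1) * L\<close>: edge \<open>i\<close> is the
  \<open>i\<close>-th block of \<open>r - 1\<close> consecutive vertices plus the first vertex of the next block.\<close>
definition loose_cycle_edge :: "nat \<Rightarrow> nat \<Rightarrow> nat \<Rightarrow> nat set" where
  "loose_cycle_edge r L i = insert ((r - 1) * (Suc i mod L)) (loose_block r i)"

lemma loose_block_disjoint:
  assumes "i \<noteq> j"
  shows "loose_block r i \<inter> loose_block r j = {}"
proof -
  have "loose_block r a \<inter> loose_block r b = {}" if "a < b" for a b
  proof -
    have "(r - 1) * Suc a \<le> (r - 1) * b"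
      using that by (intro mult_le_mono2) simp
    then show ?thesis by (auto simp: loose_block_def)
  qed
  then show ?thesis
    using assms by (metis inf_commute linorder_neqE_nat)
qed

lemma card_loose_block: "card (loose_block r i) = r - 1"
  by (simp add: loose_block_def)

lemma finite_loose_block: "finite (loose_block r i)"
  by (simp add: loose_block_def)

lemma first_in_loose_block: "2 \<le> r \<Longrightarrow> (r - 1) * i \<in> loose_block r i"
  by (simp add: loose_block_def)

lemma card_loose_cycle_edge:
  assumes "2 \<le> r" "2 \<le> L" "i < L"
  shows "card (loose_cycle_edge r L i) = r"
proof -
  have "(r - 1) * (Suc i mod L) \<notin> loose_block r i"
    using loose_block_disjoint[OF mod_Suc_neq_self[OF assms(2,3)]] first_in_loose_block[OF assms(1)]
    by blast
  then show ?thesis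
    using assms(1) by (simp add: loose_cycle_edge_def card_loose_block finite_loose_block)
qed

lemma loose_cycle_edge_subset:
  assumes "2 \<le> r" "i < L"
  shows "loose_cycle_edge r L i \<subseteq> {..<(r - 1) * L}"
proof -
  have "(r - 1) * Suc i \<le> (r - 1) * L"
    using assms(2) by (intro mult_le_mono2) simp
  moreover have "(r - 1) * (Suc i mod L) < (r - 1) * L"
    using assms by simp
  ultimately show ?thesis
    by (auto simp: loose_cycle_edge_def loose_block_def)
qed

lemma Suc_Suc_mod_neq_self:
  fixes i L :: nat
  assumes "3 \<le> L" "i < L"
  shows "Suc (Suc i) mod L \<noteq> i"
proof (cases "Suc (Suc i) < L")
  case False
  then have "Suc (Suc i) mod L = Suc (Suc i) - L"
    using assms by (simp add: le_mod_geq)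
  then show ?thesis using assms False by simp
qed simp

lemma inj_on_loose_cycle_edge:
  assumes "2 \<le> r" "3 \<le> L"
  shows "inj_on (loose_cycle_edge r L) {..<L}"
proof (rule inj_onI, rule ccontr)
  fix i j assume ij: "i \<in> {..<L}" "j \<in> {..<L}" "loose_cycle_edge r L i = loose_cycle_edge r L j" "i \<noteq> j"
  have succ: "a = Suc b mod L"
    if "a \<noteq> b" "loose_cycle_edge r L a = loose_cycle_edge r L b" for a b
  proof -
    have "(r - 1) * a \<in> loose_cycle_edge r L a"
      using first_in_loose_block[OF assms(1)] unfolding loose_cycle_edge_def by blast
    then have "(r - 1) * a \<in> loose_cycle_edge r L b"
      using that(2) by simp
    moreover have "(r - 1) * a \<notin> loose_block r b"
      using loose_block_disjoint[OF that(1)] first_in_loose_block[OF assms(1)] by blast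
    ultimately have "(r - 1) * a = (r - 1) * (Suc b mod L)"
      unfolding loose_cycle_edge_def by blast
    then show ?thesis
      using assms(1) by simp
  qed
  have "i = Suc (Suc i mod L) mod L"
    using succ[of i j] succ[of j i] ij(3,4) by simp
  then have "Suc (Suc i) mod L = i"
    by (simp add: mod_Suc_eq)
  then show False
    using Suc_Suc_mod_neq_self[OF assms(2)] ij(1) by simp
qed

lemma lessThan_eq_if_Suc_mod_closed:
  fixes L :: nat
  assumes "I \<subseteq> {..<L}" "a \<in> I" "\<forall>i\<in>I. Suc i mod L \<in> I"
  shows "I = {..<L}"
proof -
  have "a < L" using assms(1,2) by blast
  have reach: "(a + t) mod L \<in> I" for t
  proof (induction t)
    case 0
    then show ?case using assms(2) \<open>a < L\<close> by simp
  next
    case (Suc t)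
    then show ?case using assms(3) by (metis add_Suc_right mod_Suc_eq)
  qed
  have "j \<in> I" if "j < L" for j
  proof -
    have "a + (L - a + j) = j + L"
      using \<open>a < L\<close> by simp
    then show ?thesis
      using reach[of "L - a + j"] that by simp
  qed
  then show ?thesis using assms(1) by blast
qed

text \<open>If the index set \<open>I\<close> is not closed under successor, some first vertex of a block outside
  \<open>I\<close> is covered in addition to the disjoint blocks indexed by \<open>I\<close>.\<close>
lemma card_Union_loose_cycle_edges:
  assumes "2 \<le> r" "I \<subseteq> {..<L}" "i0 \<in> I" "Suc i0 mod L \<notin> I"
  shows "(r - 1) * card I + 1 \<le> card (\<Union>(loose_cycle_edge r L ` I))"
proof -
  have "finite I" using assms(2) finite_subset by blast
  define p where "p = (r - 1) * (Suc i0 mod L)"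
  have "p \<notin> (\<Union>i\<in>I. loose_block r i)"
  proof
    assume "p \<in> (\<Union>i\<in>I. loose_block r i)"
    then obtain i where "i \<in> I" "p \<in> loose_block r i" by blast
    moreover from this(1) have "i \<noteq> Suc i0 mod L" using assms(4) by blast
    ultimately show False
      using loose_block_disjoint first_in_loose_block[OF assms(1), of "Suc i0 mod L"]
      unfolding p_def by blast
  qed
  moreover have "card (\<Union>i\<in>I. loose_block r i) = (r - 1) * card I"
    using \<open>finite I\<close>
    by (subst card_UN_disjoint) (auto simp: card_loose_block finite_loose_block loose_block_disjoint)
  ultimately have "card (insert p (\<Union>i\<in>I. loose_block r i)) = (r - 1) * card I + 1"
    using \<open>finite I\<close> by (simp add: finite_loose_block)
  moreover have "insert p (\<Union>i\<in>I. loose_block r i) \<subseteq> \<Union>(loose_cycle_edge r L ` I)"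
    using assms(3) unfolding p_def loose_cycle_edge_def by blast
  moreover have "finite (\<Union>(loose_cycle_edge r L ` I))"
    using \<open>finite I\<close> by (simp add: loose_cycle_edge_def finite_loose_block)
  ultimately show ?thesis
    by (metis card_mono)
qed

text \<open>A cycle of length \<open>k < L\<close> would use a proper subset of the edges, hence span more than
  the \<open>(r - 1) * k\<close> vertices that any cycle of \<open>k\<close> edges of size \<open>r\<close> can span.\<close>
lemma girth_gt_loose_cycle:
  assumes "2 \<le> r" "3 \<le> L" "g < L"
  shows "girth_gt (loose_cycle_edge r L ` {..<L}) g"
  unfolding girth_gt_def
proof (intro allI impI notI)
  fix k assume k: "2 \<le> k \<and> k \<le> g" and "has_berge_cycle (loose_cycle_edge r L ` {..<L}) k"
  then obtain vs es where vs: "inj_on vs {..<k}" and es: "inj_on es {..<k}"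
    and cycle: "\<forall>i<k. es i \<in> loose_cycle_edge r L ` {..<L} \<and> vs i \<in> es i \<and> vs ((i + 1) mod k) \<in> es i"
    unfolding has_berge_cycle_def by blast
  define I where "I = {i \<in> {..<L}. loose_cycle_edge r L i \<in> es ` {..<k}}"
  have "I \<subseteq> {..<L}"
    unfolding I_def by blast
  have "loose_cycle_edge r L ` I = es ` {..<k}"
  proof
    show "loose_cycle_edge r L ` I \<subseteq> es ` {..<k}"
      unfolding I_def by blast
    show "es ` {..<k} \<subseteq> loose_cycle_edge r L ` I"
    proof
      fix X assume "X \<in> es ` {..<k}"
      moreover from this obtain i where "i < L" "X = loose_cycle_edge r L i"
        using cycle by blast
      ultimately show "X \<in> loose_cycle_edge r L ` I"
        unfolding I_def by blast
    qed
  qed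
  then have "card I = k"
    using card_image[OF es] card_image[OF inj_on_subset[OF inj_on_loose_cycle_edge[OF assms(1,2)] \<open>I \<subseteq> {..<L}\<close>]]
    by simp
  then obtain a where "a \<in> I"
    using k by fastforce
  moreover have "I \<noteq> {..<L}"
    using \<open>card I = k\<close> k assms(3) by auto
  ultimately obtain i0 where "i0 \<in> I" "Suc i0 mod L \<notin> I"
    using lessThan_eq_if_Suc_mod_closed[OF \<open>I \<subseteq> {..<L}\<close>] by blast
  then have "(r - 1) * k + 1 \<le> card (\<Union>i<k. es i)"
    using card_Union_loose_cycle_edges[OF assms(1) \<open>I \<subseteq> {..<L}\<close>] \<open>loose_cycle_edge r L ` I = es ` {..<k}\<close> \<open>card I = k\<close> by fastforce
  moreover have "card (\<Union>i<k. es i) \<le> (r - 1) * k"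
    using k vs cycle card_loose_cycle_edge[OF assms(1)] assms(2)
    by (intro card_Union_berge_cycle_le) auto
  ultimately show False by simp
qed

lemma exists_girth_gt_r_graph_card_eq_div:
  assumes "2 \<le> r" "2 \<le> g" "(r - 1) * (g + 1) \<le> n"
  shows "\<exists>G. r_graph r n G \<and> girth_gt G g \<and> card G = n div (r - 1)"
proof -
  define L where "L = g + 1"
  define C where "C = loose_cycle_edge r L ` {..<L}"
  define W where "W = {(r - 1) * L..<n}"
  define s where "s = (n - (r - 1) * L) div (r - 1)"
  have L: "3 \<le> L" "(r - 1) * L \<le> n" "0 < (r - 1) * L"
    using assms by (auto simp: L_def)
  have "card C = L"
    unfolding C_def using card_image[OF inj_on_loose_cycle_edge[OF assms(1) L(1)]] by simp
  have "\<Union>C \<subseteq> {..<(r - 1) * L}"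
    unfolding C_def using loose_cycle_edge_subset[OF assms(1)] by blast
  have "\<exists>G. C \<subseteq> G \<and> card G = card C + s \<and> girth_gt G g \<and> r_graph r n G \<and> finite G"
  proof (rule exists_loose_path_extension)
    show "girth_gt C g"
      unfolding C_def using assms(1) L(1) by (rule girth_gt_loose_cycle) (simp add: L_def)
    show "r_graph r n C"
      using \<open>\<Union>C \<subseteq> {..<(r - 1) * L}\<close> L(1,2) card_loose_cycle_edge[OF assms(1)]
      unfolding r_graph_def C_def by fastforce
    show "finite C" "finite W" "W \<subseteq> {..<n}"
      unfolding C_def W_def by auto
    show "W \<inter> \<Union>C = {}"
      using \<open>\<Union>C \<subseteq> {..<(r - 1) * L}\<close> unfolding W_def by auto
    show "0 < n"
      using L(2,3) by linarith
    show "0 \<notin> W"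
      using L(3) unfolding W_def by simp
    show "(r - 1) * s \<le> card W"
      unfolding s_def W_def by (simp add: times_div_less_eq_dividend)
  qed (rule assms(1))
  moreover have "n div (r - 1) = ((n - (r - 1) * L) + L * (r - 1)) div (r - 1)"
    using L(2) by (simp add: mult.commute)
  then have "n div (r - 1) = L + s"
    using assms(1) by (simp add: s_def)
  ultimately show ?thesis
    using \<open>card C = L\<close> by auto
qed

section \<open>Configuration-free hypergraphs\<close>

definition short_cycle_edges :: "nat set set \<Rightarrow> nat \<Rightarrow> nat set set" where
  "short_cycle_edges H g = {es 0 | es. \<exists>k vs. 2 \<le> k \<and> k \<le> g \<and> inj_on vs {..<k} \<and>
     inj_on es {..<k} \<and> (\<forall>i<k. es i \<in> H \<and> vs i \<in> es i \<and> vs ((i + 1) mod k) \<in> es i)}"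

lemma short_cycle_edges_subset: "short_cycle_edges H g \<subseteq> H"
  unfolding short_cycle_edges_def by force

lemma short_cycle_edge_on_cycle:
  assumes "has_berge_cycle F k" "F \<subseteq> H" "k \<le> g"
  obtains E where "E \<in> F" "E \<in> short_cycle_edges H g"
proof -
  obtain vs es where "2 \<le> k" "inj_on vs {..<k}" "inj_on es {..<k}"
    and cycle: "\<forall>i<k. es i \<in> F \<and> vs i \<in> es i \<and> vs ((i + 1) mod k) \<in> es i"
    using assms(1) unfolding has_berge_cycle_def by blast
  moreover from this have "es 0 \<in> F" by simp
  ultimately show thesis
    using that[of "es 0"] assms(2,3) unfolding short_cycle_edges_def by blast
qed

lemma berge_cycle_subset_comp_closed:
  fixes k :: nat
  assumes "comp_closed H K" "es 0 \<in> K"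
    and cycle: "\<forall>i<k. es i \<in> H \<and> vs i \<in> es i \<and> vs ((i + 1) mod k) \<in> es i"
  shows "es ` {..<k} \<subseteq> K"
proof -
  have "i < k \<longrightarrow> es i \<in> K" for i
  proof (induction i)
    case (Suc i)
    show ?case
    proof
      assume "Suc i < k"
      then have "vs (Suc i) \<in> es i \<inter> es (Suc i)" "es (Suc i) \<in> H"
        using cycle by (auto dest: spec[of _ i] spec[of _ "Suc i"])
      moreover have "es i \<in> K"
        using Suc \<open>Suc i < k\<close> by simp
      ultimately have "es (Suc i) \<inter> \<Union>K \<noteq> {}"
        by blast
      then show "es (Suc i) \<in> K"
        using comp_closed_memI[OF assms(1) \<open>es (Suc i) \<in> H\<close>] by blast
    qed
  qed (use assms(2) in simp)
  then show ?thesis by blast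
qed

locale config_free =
  fixes r n e :: nat and H :: "nat set set"
  assumes two_le_r: "2 \<le> r"
    and r_graph_H: "r_graph r n H"
    and no_config: "\<not> has_config H ((r - 1) * e) e"
begin

lemma finite_H: "finite H"
  using r_graph_H unfolding r_graph_def
  by (intro finite_subset[of H "Pow {..<n}"]) auto

lemma card_edge: "E \<in> H \<Longrightarrow> card E = r"
  using r_graph_H unfolding r_graph_def by blast

lemma finite_edge: "E \<in> H \<Longrightarrow> finite E"
  using card_edge two_le_r by (intro card_ge_0_finite) auto

lemma Union_subset: "A \<subseteq> H \<Longrightarrow> \<Union>A \<subseteq> {..<n}"
  using r_graph_H unfolding r_graph_def by blast

lemma card_Union_gt: "F \<subseteq> H \<Longrightarrow> card F = e \<Longrightarrow> (r - 1) * e < card (\<Union>F)"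
  using no_config unfolding has_config_def by (simp add: not_le)

lemma card_Union_Un_gt:
  assumes "U \<subseteq> H" "B \<subseteq> H" "U \<inter> B = {}" "card U + card B = e"
  shows "(r - 1) * e < card (\<Union>U) + card (\<Union>B)"
proof -
  have "card (U \<union> B) = e"
    using assms finite_H finite_subset by (metis card_Un_disjoint)
  then have "(r - 1) * e < card (\<Union>(U \<union> B))"
    using assms(1,2) by (intro card_Union_gt) auto
  also have "\<dots> \<le> card (\<Union>U) + card (\<Union>B)"
    by (simp add: card_Un_le)
  finally show ?thesis .
qed

lemma card_Union_components:
  assumes "KK \<subseteq> component H ` H"
  shows "card (\<Union>KK) = (\<Sum>K\<in>KK. card K)" and "card (\<Union>(\<Union>KK)) = (\<Sum>K\<in>KK. card (\<Union>K))"
proof -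
  have closed: "comp_closed H K" if "K \<in> KK" for K
    using that assms comp_closed_component by blast
  have disjoint: "K \<inter> K' = {}" if in_KK: "K \<in> KK" "K' \<in> KK" and "K \<noteq> K'" for K K'
  proof -
    obtain E E' where "E \<in> H" "E' \<in> H" "K = component H E" "K' = component H E'"
      using in_KK assms by blast
    then show ?thesis
      using component_disjoint \<open>K \<noteq> K'\<close> by blast
  qed
  have finite: "finite K" "finite (\<Union>K)" if "K \<in> KK" for K
    using closed[OF that] finite_H finite_edge unfolding comp_closed_def
    by (auto intro: finite_subset)
  show "card (\<Union>KK) = (\<Sum>K\<in>KK. card K)"
    using disjoint finite by (intro card_Union_disjoint) (auto simp: pairwise_def disjnt_def)
  have "finite KK"
    using assms finite_H finite_surj by blast
  have "\<Union>(\<Union>KK) = (\<Union>K\<in>KK. \<Union>K)"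
    by blast
  also have "card \<dots> = (\<Sum>K\<in>KK. card (\<Union>K))"
  proof (rule card_UN_disjoint)
    show "\<forall>K\<in>KK. \<forall>K'\<in>KK. K \<noteq> K' \<longrightarrow> \<Union>K \<inter> \<Union>K' = {}"
      by (intro ballI impI comp_closed_Union_disjoint[of H] closed disjoint)
  qed (use \<open>finite KK\<close> finite in auto)
  finally show "card (\<Union>(\<Union>KK)) = (\<Sum>K\<in>KK. card (\<Union>K))" .
qed

text \<open>A component through a short cycle cannot grow to \<open>e\<close> edges: the cycle spans at most
  \<open>r - 1\<close> vertices per edge, every further edge adds at most \<open>r - 1\<close> more, and \<open>e\<close> edges on
  at most \<open>(r - 1) * e\<close> vertices are forbidden.\<close>
lemma component_short_cycle_edge:
  assumes "E \<in> short_cycle_edges H e"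
  shows "card (component H E) < e" "card (\<Union>(component H E)) \<le> (r - 1) * card (component H E)"
proof -
  obtain k vs es where k: "2 \<le> k" "k \<le> e" and vs: "inj_on vs {..<k}" and es: "inj_on es {..<k}"
    and cycle: "\<forall>i<k. es i \<in> H \<and> vs i \<in> es i \<and> vs ((i + 1) mod k) \<in> es i" and E: "E = es 0"
    using assms unfolding short_cycle_edges_def by blast
  define K where "K = component H E"
  define C where "C = es ` {..<k}"
  have "E \<in> H" using E cycle k by auto
  have "C \<subseteq> K"
    unfolding C_def K_def using comp_closed_component[OF \<open>E \<in> H\<close>] mem_component E cycle
    by (intro berge_cycle_subset_comp_closed) auto
  have "card C = k"
    unfolding C_def using es by (simp add: card_image)
  have "card (\<Union>C) \<le> (r - 1) * k"
    unfolding C_def using k vs cycle card_edge by (intro card_Union_berge_cycle_le) auto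
  obtain B where B: "C \<subseteq> B" "B \<subseteq> H" "card (\<Union>B) + (r - 1) * card C \<le> card (\<Union>C) + (r - 1) * card B"
    "card B = e \<or> card B < e \<and> comp_closed H B" "\<forall>C'. comp_closed H C' \<and> C \<subseteq> C' \<longrightarrow> B \<subseteq> C'"
    using grow_subgraph[OF finite_H, of r C e] card_edge two_le_r cycle \<open>card C = k\<close> k(2)
    unfolding C_def by fastforce
  have "card (\<Union>B) \<le> (r - 1) * card B"
    using B(3) \<open>card (\<Union>C) \<le> (r - 1) * k\<close> \<open>card C = k\<close> by simp
  then have "card B \<noteq> e"
    using card_Union_gt[OF B(2)] by (metis leD)
  then have "card B < e" "comp_closed H B"
    using B(4) by auto
  have "B \<subseteq> K"
    using B(5) \<open>C \<subseteq> K\<close> comp_closed_component[OF \<open>E \<in> H\<close>] unfolding K_def by blast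
  have "E \<in> B"
    using B(1) E k(1) unfolding C_def by auto
  then have "K \<subseteq> B"
    unfolding K_def by (rule component_least[OF \<open>comp_closed H B\<close>])
  then have "K = B"
    using \<open>B \<subseteq> K\<close> by blast
  then show "card K < e" "card (\<Union>K) \<le> (r - 1) * card K"
    using \<open>card B < e\<close> \<open>card (\<Union>B) \<le> (r - 1) * card B\<close> by simp_all
qed

text \<open>Beside a deficient part \<open>U\<close> (fewer than \<open>r - 1\<close> vertices per edge), growing inside
  another component to exactly \<open>e - card U\<close> edges and adding \<open>U\<close> would give \<open>e\<close> edges on
  at most \<open>(r - 1) * e\<close> vertices.\<close>
lemma card_component_lt_if_deficient:
  assumes "U \<subseteq> H" "card U < e" "card (\<Union>U) < (r - 1) * card U"
    and "X \<in> H" "component H X \<inter> U = {}"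
  shows "card (component H X) < e - card U"
proof -
  define t where "t = e - card U"
  obtain B where B: "{X} \<subseteq> B" "B \<subseteq> H" "card (\<Union>B) + (r - 1) * card {X} \<le> card (\<Union>{X}) + (r - 1) * card B"
    "card B = t \<or> card B < t \<and> comp_closed H B" "\<forall>C. comp_closed H C \<and> {X} \<subseteq> C \<longrightarrow> B \<subseteq> C"
    using grow_subgraph[OF finite_H, of r "{X}" t] card_edge two_le_r assms(2,4)
    unfolding t_def by fastforce
  have "B \<subseteq> component H X"
    using B(5) comp_closed_component[OF assms(4)] mem_component by blast
  have "card (\<Union>B) \<le> (r - 1) * t + 1"
  proof -
    have "card (\<Union>B) + (r - 1) \<le> r + (r - 1) * card B"
      using B(3) card_edge[OF assms(4)] by simp
    moreover have "card B \<le> t"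
      using B(4) by auto
    then have "(r - 1) * card B \<le> (r - 1) * t" by simp
    ultimately show ?thesis using two_le_r by linarith
  qed
  show ?thesis
  proof (cases "card B = t")
    case True
    have "(r - 1) * e < card (\<Union>U) + card (\<Union>B)"
      using assms(1,2,5) B(2) \<open>B \<subseteq> component H X\<close> True
      by (intro card_Union_Un_gt) (auto simp: t_def)
    moreover have "(r - 1) * e = (r - 1) * card U + (r - 1) * t"
      using assms(2) by (simp add: t_def flip: distrib_left)
    ultimately show ?thesis
      using assms(3) \<open>card (\<Union>B) \<le> (r - 1) * t + 1\<close> by linarith
  next
    case False
    then have "component H X \<subseteq> B"
      using B(1,4) component_least by blast
    then have "card (component H X) \<le> card B"
      using B(2) finite_H by (intro card_mono) (auto intro: finite_subset)
    then show ?thesis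
      using False B(4) by (simp add: t_def)
  qed
qed

definition cycle_components :: "nat set set set" where
  "cycle_components = component H ` short_cycle_edges H e"

definition cyclic_part :: "nat set set" where
  "cyclic_part = \<Union>cycle_components"

lemma cycle_components_subset: "cycle_components \<subseteq> component H ` H"
  unfolding cycle_components_def using short_cycle_edges_subset by blast

lemma cycle_component_subset: "K \<in> cycle_components \<Longrightarrow> K \<subseteq> H"
  using cycle_components_subset component_subset by blast

lemma comp_closed_cyclic_part: "comp_closed H cyclic_part"
  unfolding cyclic_part_def using cycle_components_subset comp_closed_component
  by (intro comp_closed_Union) blast

lemma comp_closed_outside_cyclic_part: "comp_closed H (H - cyclic_part)"
  using comp_closed_self comp_closed_cyclic_part by (rule comp_closed_Diff)

lemma girth_gt_outside_cyclic_part: "girth_gt (H - cyclic_part) e"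
  unfolding girth_gt_def
proof (intro allI impI notI)
  fix k assume "2 \<le> k \<and> k \<le> e" "has_berge_cycle (H - cyclic_part) k"
  then obtain E where "E \<in> H - cyclic_part" "E \<in> short_cycle_edges H e"
    using short_cycle_edge_on_cycle[of "H - cyclic_part" k H e] by blast
  then show False
    using mem_component unfolding cyclic_part_def cycle_components_def by blast
qed

lemma card_H_split_cyclic_part: "card H = card (H - cyclic_part) + card cyclic_part"
  using comp_closed_cyclic_part finite_H unfolding comp_closed_def
  by (metis card_Diff_subset card_mono le_add_diff_inverse2 finite_subset)

lemma Union_cyclic_part_subset: "\<Union>cyclic_part \<subseteq> {..<n}"
  using comp_closed_cyclic_part Union_subset unfolding comp_closed_def by blast

lemma card_cyclic_part_le_if_dense:
  assumes "\<forall>K\<in>cycle_components. (r - 1) * card K \<le> card (\<Union>K)"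
  shows "(r - 1) * card cyclic_part \<le> card (\<Union>cyclic_part)"
proof -
  have "(r - 1) * card cyclic_part = (\<Sum>K\<in>cycle_components. (r - 1) * card K)"
    unfolding cyclic_part_def card_Union_components(1)[OF cycle_components_subset]
    by (simp add: sum_distrib_left)
  also have "\<dots> \<le> (\<Sum>K\<in>cycle_components. card (\<Union>K))"
    using assms by (intro sum_mono) blast
  also have "\<dots> = card (\<Union>cyclic_part)"
    unfolding cyclic_part_def card_Union_components(2)[OF cycle_components_subset] ..
  finally show ?thesis .
qed

text \<open>If no cycle component is deficient, the cyclic part has at least \<open>r - 1\<close> vertices per
  edge; they can be reused for a loose path with as many edges, attached at any vertex outside.\<close>
lemma exists_girth_gt_if_dense:
  assumes "\<forall>K\<in>cycle_components. (r - 1) * card K \<le> card (\<Union>K)"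
  shows "(r - 1) * card H \<le> n \<or> (\<exists>G. r_graph r n G \<and> girth_gt G e \<and> card H \<le> card G)"
proof -
  have dense: "(r - 1) * card cyclic_part \<le> card (\<Union>cyclic_part)"
    using assms by (rule card_cyclic_part_le_if_dense)
  have disjoint: "\<Union>cyclic_part \<inter> \<Union>(H - cyclic_part) = {}"
    using comp_closed_cyclic_part comp_closed_outside_cyclic_part by (rule comp_closed_Union_disjoint) blast
  show ?thesis
  proof (cases "\<exists>z<n. z \<notin> \<Union>cyclic_part")
    case True
    then obtain z where "z < n" "z \<notin> \<Union>cyclic_part" by blast
    have "r_graph r n (H - cyclic_part)"
      using r_graph_H unfolding r_graph_def by blast
    then obtain G where "card G = card (H - cyclic_part) + card cyclic_part" "girth_gt G e" "r_graph r n G"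
      using exists_loose_path_extension[OF girth_gt_outside_cyclic_part _ _ two_le_r, of n "\<Union>cyclic_part" z]
        finite_H Union_cyclic_part_subset finite_subset[OF Union_cyclic_part_subset]
        disjoint \<open>z < n\<close> \<open>z \<notin> \<Union>cyclic_part\<close> dense
      by blast
    then show ?thesis
      using card_H_split_cyclic_part by auto
  next
    case False
    have "H - cyclic_part = {}"
    proof (rule ccontr)
      assume "H - cyclic_part \<noteq> {}"
      then obtain X where "X \<in> H - cyclic_part" by blast
      moreover from this have "X \<noteq> {}"
        using card_edge two_le_r by fastforce
      ultimately show False
        using False disjoint Union_subset[of "{X}"] by blast
    qed
    then have "card H = card cyclic_part"
      using card_H_split_cyclic_part by (metis add_0 card.empty)
    then have "(r - 1) * card H \<le> card (\<Union>cyclic_part)"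
      using dense by simp
    also have "\<dots> \<le> n"
      using card_mono[OF _ Union_cyclic_part_subset] by simp
    finally show ?thesis by blast
  qed
qed

lemma finite_cycle_components: "finite cycle_components"
  using cycle_components_subset finite_H finite_surj by blast

lemma finite_cycle_component: "K \<in> cycle_components \<Longrightarrow> finite K"
  using cycle_component_subset finite_H finite_subset by blast

lemma cycle_components_disjoint:
  assumes "K \<in> cycle_components" "K' \<in> cycle_components" "K \<noteq> K'"
  shows "K \<inter> K' = {}"
proof -
  obtain E E' where "E \<in> H" "E' \<in> H" "K = component H E" "K' = component H E'"
    using assms(1,2) cycle_components_subset by blast
  then show ?thesis
    using assms(3) by (simp add: component_disjoint)
qed

lemma deficient_Un_cycle_component:
  assumes "U \<subseteq> H" "card U < e" "card (\<Union>U) < (r - 1) * card U"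
    and "L \<in> cycle_components" "U \<inter> L = {}"
  shows "card (U \<union> L) < e" "card (\<Union>(U \<union> L)) < (r - 1) * card (U \<union> L)"
proof -
  obtain E where E: "E \<in> short_cycle_edges H e" "L = component H E"
    using assms(4) unfolding cycle_components_def by blast
  then have "card L < e - card U"
    using card_component_lt_if_deficient[OF assms(1-3)] assms(5) short_cycle_edges_subset by blast
  moreover have "card (U \<union> L) = card U + card L"
    using assms(1,5) finite_H finite_cycle_component[OF assms(4)]
    by (simp add: card_Un_disjoint finite_subset)
  ultimately show "card (U \<union> L) < e"
    by simp
  have "card (\<Union>(U \<union> L)) \<le> card (\<Union>U) + card (\<Union>L)"
    by (simp add: card_Un_le)
  moreover have "card (\<Union>L) \<le> (r - 1) * card L"
    using component_short_cycle_edge E by simp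
  ultimately show "card (\<Union>(U \<union> L)) < (r - 1) * card (U \<union> L)"
    using assms(3) \<open>card (U \<union> L) = card U + card L\<close> by (simp add: distrib_left)
qed

text \<open>Starting from the deficient component, the union stays deficient as further cycle
  components are added one at a time.\<close>
lemma card_cyclic_part_lt:
  assumes "K0 \<in> cycle_components" "card (\<Union>K0) < (r - 1) * card K0"
  shows "card cyclic_part < e"
proof -
  have "card (\<Union>(insert K0 J)) < e \<and> card (\<Union>(\<Union>(insert K0 J))) < (r - 1) * card (\<Union>(insert K0 J))"
    if "J \<subseteq> cycle_components - {K0}" for J
  proof -
    have "finite J"
      using that finite_cycle_components finite_subset by blast
    then show ?thesis
      using that
    proof (induction J rule: finite_induct)
      case empty
      then show ?case
        using assms component_short_cycle_edge unfolding cycle_components_def by auto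
    next
      case (insert L J)
      have "\<Union>(insert K0 J) \<subseteq> H"
        using insert.prems assms(1) cycle_component_subset by blast
      moreover have "M \<inter> L = {}" if "M \<in> insert K0 J" for M
      proof (rule cycle_components_disjoint)
        show "M \<in> cycle_components" "L \<in> cycle_components"
          using that insert.prems assms(1) by blast+
        show "M \<noteq> L"
          using that insert.hyps(2) insert.prems by blast
      qed
      then have "\<Union>(insert K0 J) \<inter> L = {}"
        by blast
      moreover have "\<Union>(insert K0 (insert L J)) = \<Union>(insert K0 J) \<union> L"
        by blast
      ultimately show ?case
        using deficient_Un_cycle_component[of "\<Union>(insert K0 J)" L] insert by simp
    qed
  qed
  from this[of "cycle_components - {K0}"] have "card (\<Union>(insert K0 (cycle_components - {K0}))) < e"
    by blast
  moreover have "\<Union>(insert K0 (cycle_components - {K0})) = cyclic_part"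
    unfolding cyclic_part_def using assms(1) by blast
  ultimately show ?thesis by simp
qed

text \<open>Having fewer than \<open>e\<close> edges and girth greater than \<open>e\<close>, these components are acyclic.\<close>
lemma component_outside_cyclic_part:
  assumes "K0 \<in> cycle_components" "card (\<Union>K0) < (r - 1) * card K0" "X \<in> H - cyclic_part"
  shows "component H X \<subseteq> H - cyclic_part" "card (component H X) < e"
    "(r - 1) * card (component H X) + 1 \<le> card (\<Union>(component H X))"
proof -
  show sub: "component H X \<subseteq> H - cyclic_part"
    using comp_closed_outside_cyclic_part assms(3) by (rule component_least)
  have "K0 \<subseteq> cyclic_part"
    using assms(1) unfolding cyclic_part_def by blast
  then have "component H X \<inter> K0 = {}"
    using sub by blast
  moreover have "card K0 < e"
    using assms(1) component_short_cycle_edge unfolding cycle_components_def by blast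
  ultimately have "card (component H X) < e - card K0"
    using card_component_lt_if_deficient[OF cycle_component_subset[OF assms(1)] _ assms(2)] assms(3)
    by blast
  then show "card (component H X) < e" by simp
  have "finite (component H X)"
    using sub finite_H finite_subset by blast
  moreover have "berge_acyclic (component H X)"
    using girth_gt_imp_berge_acyclic[OF girth_gt_outside_cyclic_part sub] \<open>card (component H X) < e\<close>
      \<open>finite (component H X)\<close> by simp
  ultimately show "(r - 1) * card (component H X) + 1 \<le> card (\<Union>(component H X))"
    using card_Union_berge_acyclic[of "component H X" r] mem_component[of X H] sub card_edge two_le_r
    by fastforce
qed

lemma card_outside_cyclic_part:
  assumes "K0 \<in> cycle_components" "card (\<Union>K0) < (r - 1) * card K0"
  obtains c where "(r - 1) * card (H - cyclic_part) + c \<le> n" "card (H - cyclic_part) \<le> (e - 1) * c"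
proof -
  define TT where "TT = component H ` (H - cyclic_part)"
  have "TT \<subseteq> component H ` H"
    unfolding TT_def by blast
  have "\<Union>TT = H - cyclic_part"
    using component_outside_cyclic_part(1)[OF assms] mem_component unfolding TT_def by blast
  have small: "card L \<le> e - 1" and rich: "(r - 1) * card L + 1 \<le> card (\<Union>L)" if "L \<in> TT" for L
    using that component_outside_cyclic_part(2,3)[OF assms] unfolding TT_def by fastforce+
  have "(r - 1) * card (H - cyclic_part) + card TT = (r - 1) * (\<Sum>L\<in>TT. card L) + (\<Sum>L\<in>TT. 1)"
    unfolding \<open>\<Union>TT = H - cyclic_part\<close>[symmetric] card_Union_components(1)[OF \<open>TT \<subseteq> _\<close>]
    by simp
  also have "\<dots> = (\<Sum>L\<in>TT. (r - 1) * card L + 1)"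
    by (simp only: sum_distrib_left sum.distrib)
  also have "\<dots> \<le> (\<Sum>L\<in>TT. card (\<Union>L))"
    using rich by (rule sum_mono)
  also have "\<dots> = card (\<Union>(H - cyclic_part))"
    unfolding \<open>\<Union>TT = H - cyclic_part\<close>[symmetric] card_Union_components(2)[OF \<open>TT \<subseteq> _\<close>] ..
  also have "\<dots> \<le> n"
    using card_mono[OF _ Union_subset[of "H - cyclic_part"]] by simp
  finally have "(r - 1) * card (H - cyclic_part) + card TT \<le> n" .
  moreover have "card (H - cyclic_part) \<le> (e - 1) * card TT"
    unfolding \<open>\<Union>TT = H - cyclic_part\<close>[symmetric] card_Union_components(1)[OF \<open>TT \<subseteq> _\<close>]
    using sum_mono[OF small] by (simp add: mult.commute)
  ultimately show thesis by (rule that)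
qed

text \<open>With a deficient cycle component every component is small, and small acyclic
  components waste a vertex each: either there are many of them, or few and so few edges.\<close>
lemma card_le_if_deficient:
  assumes "K0 \<in> cycle_components" "card (\<Union>K0) < (r - 1) * card K0"
    and "(r - 1) * (e + (r - 1) * e * e) \<le> n"
  shows "(r - 1) * card H \<le> n"
proof -
  define t where "t = card (H - cyclic_part)"
  obtain c where c: "(r - 1) * t + c \<le> n" "t \<le> (e - 1) * c"
    using card_outside_cyclic_part[OF assms(1,2)] unfolding t_def by blast
  have "card H \<le> e + t"
    using card_H_split_cyclic_part card_cyclic_part_lt[OF assms(1,2)] unfolding t_def by simp
  then have "(r - 1) * card H \<le> (r - 1) * t + (r - 1) * e"
    by (metis add.commute distrib_left mult_le_mono2)
  show ?thesis
  proof (cases "(r - 1) * e \<le> c")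
    case True
    then show ?thesis
      using \<open>(r - 1) * card H \<le> _\<close> c(1) by linarith
  next
    case False
    then have "t \<le> (e - 1) * ((r - 1) * e)"
      using c(2) by (meson le_trans less_imp_le_nat mult_le_mono2 not_le)
    also have "\<dots> \<le> (r - 1) * e * e"
      by (simp add: mult.commute mult.left_commute)
    finally have "card H \<le> e + (r - 1) * e * e"
      using \<open>card H \<le> e + t\<close> by linarith
    then show ?thesis
      using assms(3) by (meson le_trans mult_le_mono2)
  qed
qed

theorem exists_girth_gt_card_ge:
  assumes "2 \<le> e" "(r - 1) * (e + 1 + (r - 1) * e * e) \<le> n"
  shows "\<exists>G. r_graph r n G \<and> girth_gt G e \<and> card H \<le> card G"
proof -
  have "(r - 1) * (e + 1) \<le> n" "(r - 1) * (e + (r - 1) * e * e) \<le> n"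
    using assms(2) by (auto elim!: order.trans[rotated] intro!: mult_le_mono2)
  have few_edges: "\<exists>G. r_graph r n G \<and> girth_gt G e \<and> card H \<le> card G"
    if "(r - 1) * card H \<le> n"
  proof -
    obtain G where "r_graph r n G" "girth_gt G e" "card G = n div (r - 1)"
      using exists_girth_gt_r_graph_card_eq_div[OF two_le_r assms(1) \<open>(r - 1) * (e + 1) \<le> n\<close>] by blast
    moreover have "card H \<le> n div (r - 1)"
      using that two_le_r by (simp add: less_eq_div_iff_mult_less_eq mult.commute)
    ultimately show ?thesis by auto
  qed
  show ?thesis
  proof (cases "\<forall>K\<in>cycle_components. (r - 1) * card K \<le> card (\<Union>K)")
    case True
    then show ?thesis
      using exists_girth_gt_if_dense few_edges by blast
  next
    case False
    then obtain K0 where "K0 \<in> cycle_components" "card (\<Union>K0) < (r - 1) * card K0"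
      by (auto simp: not_le)
    then show ?thesis
      using card_le_if_deficient \<open>(r - 1) * (e + (r - 1) * e * e) \<le> n\<close> few_edges by blast
  qed
qed

end

lemma f_r_eq_h_r_if_dominated:
  assumes "\<And>H. r_graph r n H \<Longrightarrow> girth_gt H g \<Longrightarrow> \<not> has_config H v g"
    and "\<And>H. r_graph r n H \<Longrightarrow> \<not> has_config H v g \<Longrightarrow>
      \<exists>G. r_graph r n G \<and> girth_gt G g \<and> card H \<le> card G"
  shows "f_r r n v g = h_r r n g"
proof -
  define Af where "Af = {card H | H. r_graph r n H \<and> \<not> has_config H v g}"
  define Ah where "Ah = {card H | H. r_graph r n H \<and> girth_gt H g}"
  have "Af \<subseteq> card ` Pow (Pow {..<n})"
    unfolding Af_def r_graph_def by blast
  then have "finite Af"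
    by (rule finite_subset) simp
  have "Ah \<subseteq> Af"
    unfolding Ah_def Af_def using assms(1) by blast
  have "Max Af = Max Ah" if ne: "Af \<noteq> {}"
  proof (rule antisym)
    obtain H where "Max Af = card H" "r_graph r n H" "\<not> has_config H v g"
      using Max_in[OF \<open>finite Af\<close> ne] unfolding Af_def by blast
    then obtain G where "card (G :: nat set set) \<in> Ah" "Max Af \<le> card G"
      using assms(2) unfolding Ah_def by fastforce
    then show "Max Af \<le> Max Ah"
      using \<open>finite Af\<close> \<open>Ah \<subseteq> Af\<close> by (meson Max_ge finite_subset le_trans)
    show "Max Ah \<le> Max Af"
      using \<open>card G \<in> Ah\<close> \<open>Ah \<subseteq> Af\<close> \<open>finite Af\<close> by (intro Max_mono) auto
  qed
  moreover have "Ah = {}" if "Af = {}"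
    using that \<open>Ah \<subseteq> Af\<close> by blast
  ultimately show ?thesis
    unfolding f_r_def h_r_def Af_def[symmetric] Ah_def[symmetric] by fastforce
qed

theorem proposition1p10:
  fixes r e :: nat
  assumes "r \<ge> 2" and "e \<ge> 2"
  shows "\<exists>n0. \<forall>n\<ge>n0. f_r r n ((r - 1) * e) e = h_r r n e"
proof (intro exI allI impI)
  fix n assume n: "(r - 1) * (e + 1 + (r - 1) * e * e) \<le> n"
  show "f_r r n ((r - 1) * e) e = h_r r n e"
  proof (rule f_r_eq_h_r_if_dominated)
    show "\<not> has_config H ((r - 1) * e) e" if "r_graph r n H" "girth_gt H e" for H
      using girth_gt_imp_no_config[OF _ _ that] assms by simp
    show "\<exists>G. r_graph r n G \<and> girth_gt G e \<and> card H \<le> card G"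
      if "r_graph r n H" "\<not> has_config H ((r - 1) * e) e" for H
      using config_free.exists_girth_gt_card_ge[OF _ assms(2) n] that assms(1)
      unfolding config_free_def by blast
  qed
qed

end
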